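(* Let $X$ be a separable Hilbert space, $N\ge0$ an integer, and $F\subset H^2(\mathbb{D},X)$ a closed subspace. The following are equivalent: (i) there is an $X$-valued polynomial $p$ of degree $N$ with $F=E_p$; (ii) $\dim F=N+1$ and $F=H^2(\mathbb{D},X)\ominus\Theta H^2(\mathbb{D},X)$, where $$\Theta(z)=(P_{N+1}^\perp+zP_{N+1})(P_N^\perp+zP_N)\cdots(P_1^\perp+zP_1)$$ for some orthogonal projections $P_1,\dots,P_{N+1}$ on $X$ (with $P^\perp=I-P$), and $\dim\operatorname{Ker}\Theta(0)^*=1$.
   Context: $H^2(\mathbb{D},X)$: $X$-valued power series with square-summable coefficient norms; $S^*$ the backward shift; $E_p$ the closed linear span of $\{S^{*n}p:n\ge0\}$. $\Theta H^2(\mathbb{D},X)=\{\Theta g: g\in H^2(\mathbb{D},X)\}$, with $\Theta$ acting pointwise as an operator-valued function. *)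

theory Defs
  imports "HOL-Analysis.Analysis"
begin

text \<open>Together with the sort
complete_space this is a complex Hilbert space.\<close>

class complex_inner = real_normed_vector +
  fixes scaleC :: "complex \<Rightarrow> 'a \<Rightarrow> 'a" (infixr \<open>*\<^sub>C\<close> 75)
    and cinner :: "'a \<Rightarrow> 'a \<Rightarrow> complex"
  assumes scaleC_add_right: "a *\<^sub>C (x + y) = a *\<^sub>C x + a *\<^sub>C y"
    and scaleC_add_left: "(a + b) *\<^sub>C x = a *\<^sub>C x + b *\<^sub>C x"
    and scaleC_scaleC: "a *\<^sub>C (b *\<^sub>C x) = (a * b) *\<^sub>C x"
    and scaleC_one: "1 *\<^sub>C x = x"
    and scaleR_scaleC: "r *\<^sub>R x = complex_of_real r *\<^sub>C x"
    and cinner_commute: "cinner x y = cnj (cinner y x)"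
    and cinner_add_left: "cinner (x + y) z = cinner x z + cinner y z"
    and cinner_scaleC_left: "cinner (a *\<^sub>C x) y = a * cinner x y"
    and cinner_nonneg: "0 \<le> Re (cinner x x)"
    and cinner_eq_zero_iff: "cinner x x = 0 \<longleftrightarrow> x = 0"
    and norm_eq_sqrt_cinner: "norm x = sqrt (Re (cinner x x))"

definition separable_space_ax :: "'a::topological_space itself \<Rightarrow> bool" where
  "separable_space_ax _ \<longleftrightarrow> (\<exists>D::'a set. countable D \<and> closure D = UNIV)"

definition cspan :: "'a::complex_inner set \<Rightarrow> 'a set" where
  "cspan S = {x. \<exists>T c. finite T \<and> T \<subseteq> S \<and> x = (\<Sum>v\<in>T. c v *\<^sub>C v)}"

definition cindependent :: "'a::complex_inner set \<Rightarrow> bool" where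
  "cindependent S \<longleftrightarrow> (\<forall>T c. finite T \<and> T \<subseteq> S \<and> (\<Sum>v\<in>T. c v *\<^sub>C v) = 0 \<longrightarrow> (\<forall>v\<in>T. c v = 0))"

definition cdim_eq :: "'a::complex_inner set \<Rightarrow> nat \<Rightarrow> bool" where
  "cdim_eq V n \<longleftrightarrow> (\<exists>B. finite B \<and> card B = n \<and> B \<subseteq> V \<and> cindependent B \<and> cspan B = V)"

definition orth_proj :: "('a::complex_inner \<Rightarrow> 'a) \<Rightarrow> bool" where
  "orth_proj P \<longleftrightarrow> (\<forall>x y. P (x + y) = P x + P y) \<and> (\<forall>a x. P (a *\<^sub>C x) = a *\<^sub>C P x)
     \<and> (\<forall>x. P (P x) = P x) \<and> (\<forall>x y. cinner (P x) y = cinner x (P y))"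

definition adjoint :: "('a::complex_inner \<Rightarrow> 'a) \<Rightarrow> ('a \<Rightarrow> 'a)" where
  "adjoint T = (THE S. \<forall>x y. cinner (T x) y = cinner x (S y))"

section \<open>The Hardy space H^2(D,X), as sequences of Taylor coefficients\<close>

definition H2 :: "(nat \<Rightarrow> 'a::complex_inner) set" where
  "H2 = {f. summable (\<lambda>n. (norm (f n))\<^sup>2)}"

definition h2inner :: "(nat \<Rightarrow> 'a::complex_inner) \<Rightarrow> (nat \<Rightarrow> 'a) \<Rightarrow> complex" where
  "h2inner f g = (\<Sum>n. cinner (f n) (g n))"

definition h2norm :: "(nat \<Rightarrow> 'a::complex_inner) \<Rightarrow> real" where
  "h2norm f = sqrt (\<Sum>n. (norm (f n))\<^sup>2)"

definition h2_closure :: "(nat \<Rightarrow> 'a::complex_inner) set \<Rightarrow> (nat \<Rightarrow> 'a) set" where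
  "h2_closure A = {f \<in> H2. \<forall>e>0. \<exists>g\<in>A. h2norm (\<lambda>n. f n - g n) < e}"

definition h2_closed_subspace :: "(nat \<Rightarrow> 'a::complex_inner) set \<Rightarrow> bool" where
  "h2_closed_subspace F \<longleftrightarrow> F \<subseteq> H2 \<and> (\<lambda>n. 0) \<in> F
     \<and> (\<forall>f\<in>F. \<forall>g\<in>F. (\<lambda>n. f n + g n) \<in> F)
     \<and> (\<forall>a. \<forall>f\<in>F. (\<lambda>n. a *\<^sub>C f n) \<in> F)
     \<and> h2_closure F = F"

definition seq_cspan :: "(nat \<Rightarrow> 'a::complex_inner) set \<Rightarrow> (nat \<Rightarrow> 'a) set" where
  "seq_cspan S = {f. \<exists>T c. finite T \<and> T \<subseteq> S \<and> f = (\<lambda>n. \<Sum>v\<in>T. c v *\<^sub>C v n)}"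

definition seq_cindependent :: "(nat \<Rightarrow> 'a::complex_inner) set \<Rightarrow> bool" where
  "seq_cindependent S \<longleftrightarrow> (\<forall>T c. finite T \<and> T \<subseteq> S \<and> (\<forall>n. (\<Sum>v\<in>T. c v *\<^sub>C v n) = 0)
      \<longrightarrow> (\<forall>v\<in>T. c v = 0))"

definition seq_cdim_eq :: "(nat \<Rightarrow> 'a::complex_inner) set \<Rightarrow> nat \<Rightarrow> bool" where
  "seq_cdim_eq F n \<longleftrightarrow> (\<exists>B. finite B \<and> card B = n \<and> B \<subseteq> F \<and> seq_cindependent B \<and> seq_cspan B = F)"

definition bshift :: "(nat \<Rightarrow> 'a) \<Rightarrow> (nat \<Rightarrow> 'a)" where
  "bshift f = (\<lambda>n. f (Suc n))"

definition E :: "(nat \<Rightarrow> 'a::complex_inner) \<Rightarrow> (nat \<Rightarrow> 'a) set" where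
  "E p = h2_closure (seq_cspan {(bshift ^^ k) p | k. True})"

definition is_poly_deg :: "(nat \<Rightarrow> 'a::zero) \<Rightarrow> nat \<Rightarrow> bool" where
  "is_poly_deg p N \<longleftrightarrow> p N \<noteq> 0 \<and> (\<forall>n>N. p n = 0)"

text \<open>Multiplication on H^2 by the operator-valued function z \<mapsto> P^\<bottom> + z P
  (acting on Taylor coefficients).\<close>
definition mult_factor :: "('a::complex_inner \<Rightarrow> 'a) \<Rightarrow> (nat \<Rightarrow> 'a) \<Rightarrow> (nat \<Rightarrow> 'a)" where
  "mult_factor P g = (\<lambda>n. (g n - P (g n)) + (if n = 0 then 0 else P (g (n - 1))))"

text \<open>Multiplication by \<Theta>(z) = (P_{N+1}^\<bottom> + z P_{N+1}) \<dots> (P_1^\<bottom> + z P_1),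
  with the projections given as P 1, \<dots>, P (N+1).\<close>
definition Theta_mult :: "(nat \<Rightarrow> 'a::complex_inner \<Rightarrow> 'a) \<Rightarrow> nat \<Rightarrow> (nat \<Rightarrow> 'a) \<Rightarrow> (nat \<Rightarrow> 'a)" where
  "Theta_mult P N g = fold (\<lambda>k h. mult_factor (P k) h) [1..<N+2] g"

definition Theta0 :: "(nat \<Rightarrow> 'a::complex_inner \<Rightarrow> 'a) \<Rightarrow> nat \<Rightarrow> 'a \<Rightarrow> 'a" where
  "Theta0 P N x = fold (\<lambda>k y. y - P k y) [1..<N+2] x"

definition h2_orth_compl :: "(nat \<Rightarrow> 'a::complex_inner) set \<Rightarrow> (nat \<Rightarrow> 'a) set" where
  "h2_orth_compl M = {f \<in> H2. \<forall>g\<in>M. h2inner f g = 0}"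

end

theory Submission
  imports Defs "HOL-Library.Function_Algebras"
begin

text \<open>
  Work with Taylor coefficient sequences.  Multiplication by the factor
  \<open>P\<^sup>\<bottom> + zP\<close> has the adjoint \<open>f \<mapsto> P\<^sup>\<bottom>f + P S\<^sup>*f\<close>, so the model space
  \<open>H\<^sup>2 \<ominus> \<Theta>H\<^sup>2\<close> is the kernel of the product of these adjoints; this kernel is closed,
  invariant under the backward shift, consists of polynomials of degree \<open>\<le> N\<close>, and the
  top coefficient of each of its elements lies in \<open>Ker \<Theta>(0)\<^sup>*\<close>.

  (i) \<open>\<Longrightarrow>\<close> (ii): by induction on the degree.  For a polynomial \<open>p\<close> of degree \<open>m\<close> let \<open>Q\<close> be the
  projection onto the line through its leading coefficient; then \<open>P\<^sup>\<bottom>p + Q S\<^sup>*p\<close> has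
  degree \<open>m - 1\<close>, and the projections for it, extended by \<open>Q\<close>, work for \<open>p\<close>.  The span of
  the shifts of \<open>p\<close> then is a model space, hence closed, so it equals \<open>E\<^sub>p\<close>; it has the
  basis \<open>p, S\<^sup>*p, \<dots>, S\<^sup>*\<^sup>Np\<close>.

  (ii) \<open>\<Longrightarrow>\<close> (i): if all top coefficients of a subspace lie in one line, its elements of
  degree \<open>< k\<close> span a space of dimension \<open>\<le> k\<close>.  Hence an \<open>(N+1)\<close>-dimensional model
  space contains some \<open>p\<close> of exact degree \<open>N\<close>, and by shift invariance and dimension
  counting it is spanned by the shifts of \<open>p\<close>, i.e. it equals \<open>E\<^sub>p\<close>.
\<close>

section \<open>Complex inner product spaces\<close>

lemma scaleC_zero_left [simp]: "0 *\<^sub>C x = 0"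
proof -
  have "(0 + 0) *\<^sub>C x = 0 *\<^sub>C x + 0 *\<^sub>C x" by (rule scaleC_add_left)
  then show ?thesis by simp
qed

lemma scaleC_zero_right [simp]: "a *\<^sub>C 0 = 0"
proof -
  have "a *\<^sub>C (0 + 0) = a *\<^sub>C 0 + a *\<^sub>C 0" by (rule scaleC_add_right)
  then show ?thesis by simp
qed

lemma scaleC_minus_right: "a *\<^sub>C (- x) = - (a *\<^sub>C x)"
proof -
  have "a *\<^sub>C x + a *\<^sub>C (- x) = 0" using scaleC_add_right[of a x "- x"] by simp
  then show ?thesis by (rule minus_unique[symmetric])
qed

lemma scaleC_diff_right: "a *\<^sub>C (x - y) = a *\<^sub>C x - a *\<^sub>C y"
  using scaleC_add_right[of a x "- y"] by (simp add: scaleC_minus_right)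

lemma scaleC_eq_0_iff: "a *\<^sub>C x = 0 \<longleftrightarrow> a = 0 \<or> x = 0"
proof
  assume h: "a *\<^sub>C x = 0"
  show "a = 0 \<or> x = 0"
  proof (cases "a = 0")
    case False
    have "x = (inverse a * a) *\<^sub>C x" using False by (simp add: scaleC_one)
    also have "\<dots> = inverse a *\<^sub>C (a *\<^sub>C x)" by (simp add: scaleC_scaleC)
    also have "\<dots> = 0" using h by simp
    finally show ?thesis by simp
  qed simp
qed auto

lemma cinner_add_right: "cinner x (y + z) = cinner x y + cinner x z"
  by (metis cinner_commute cinner_add_left complex_cnj_add)

lemma cinner_scaleC_right: "cinner x (a *\<^sub>C y) = cnj a * cinner x y"
  by (metis cinner_commute cinner_scaleC_left complex_cnj_mult complex_cnj_cnj)

lemma cinner_zero_left [simp]: "cinner 0 y = 0"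
  using cinner_scaleC_left[of 0 0 y] by simp

lemma cinner_zero_right [simp]: "cinner x 0 = 0"
  using cinner_scaleC_right[of x 0 0] by simp

lemma cinner_diff_left: "cinner (x - y) z = cinner x z - cinner y z"
proof -
  have "cinner (x - y) z + cinner y z = cinner x z" using cinner_add_left[of "x - y" y z] by simp
  then show ?thesis by (simp add: eq_diff_eq)
qed

lemma cinner_diff_right: "cinner x (y - z) = cinner x y - cinner x z"
  by (metis cinner_commute cinner_diff_left complex_cnj_diff)

lemma Re_cinner_self: "Re (cinner x x) = (norm x)\<^sup>2"
  using norm_eq_sqrt_cinner[of x] cinner_nonneg[of x] by simp

lemma cinner_self: "cinner x x = complex_of_real ((norm x)\<^sup>2)"
proof -
  have "Im (cinner x x) = Im (cnj (cinner x x))" using cinner_commute[of x x] by simp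
  then have "Im (cinner x x) = 0" by simp
  then show ?thesis by (simp add: complex_eq_iff Re_cinner_self)
qed

text \<open>The elementary bound \<open>2|\<langle>a,b\<rangle>| \<le> \<parallel>a\<parallel>\<^sup>2 + \<parallel>b\<parallel>\<^sup>2\<close>, obtained from
  \<open>\<parallel>a - u b\<parallel>\<^sup>2 \<ge> 0\<close> for the unimodular \<open>u\<close> making \<open>\<langle>a, u b\<rangle>\<close> real; it makes the
  inner product of two \<open>H\<^sup>2\<close> sequences summable.\<close>

lemma cinner_bound: "cmod (cinner a b) \<le> ((norm a)\<^sup>2 + (norm b)\<^sup>2) / 2"
proof (cases "cinner a b = 0")
  case False
  define r where "r = cmod (cinner a b)"
  define u where "u = cinner a b / complex_of_real r"
  have r: "complex_of_real r \<noteq> 0" using False by (simp add: r_def)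
  have square: "cinner a b * cnj (cinner a b) = complex_of_real r * complex_of_real r"
    unfolding r_def by (simp add: complex_norm_square[symmetric] power2_eq_square)
  have ab: "cinner a (u *\<^sub>C b) = complex_of_real r"
    using r by (simp add: cinner_scaleC_right u_def square field_simps)
  have ba: "cinner (u *\<^sub>C b) a = complex_of_real r"
    using ab cinner_commute[of "u *\<^sub>C b" a] by simp
  have u: "u * cnj u = 1"
    using r by (simp add: u_def square field_simps)
  have bb: "cinner (u *\<^sub>C b) (u *\<^sub>C b) = cinner b b"
    by (simp add: cinner_scaleC_left cinner_scaleC_right mult.assoc[symmetric] u mult.commute[of "cnj u" u])
  have "0 \<le> Re (cinner (a - u *\<^sub>C b) (a - u *\<^sub>C b))" by (rule cinner_nonneg)
  also have "cinner (a - u *\<^sub>C b) (a - u *\<^sub>C b)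
      = cinner a a - cinner a (u *\<^sub>C b) - (cinner (u *\<^sub>C b) a - cinner (u *\<^sub>C b) (u *\<^sub>C b))"
    by (simp add: cinner_diff_left cinner_diff_right)
  finally have "0 \<le> (norm a)\<^sup>2 - r - (r - (norm b)\<^sup>2)" using ab ba bb by (simp add: Re_cinner_self)
  then show ?thesis by (simp add: r_def)
qed simp

lemma pythagoras: "cinner u w = 0 \<Longrightarrow> (norm (u + w))\<^sup>2 = (norm u)\<^sup>2 + (norm w)\<^sup>2"
proof -
  assume uw: "cinner u w = 0"
  then have wu: "cinner w u = 0" using cinner_commute[of w u] by simp
  have "cinner (u + w) (u + w) = cinner u u + cinner w w"
    by (simp add: cinner_add_left cinner_add_right uw wu)
  then have "complex_of_real ((norm (u + w))\<^sup>2) = complex_of_real ((norm u)\<^sup>2 + (norm w)\<^sup>2)"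
    by (simp only: cinner_self of_real_add)
  then show ?thesis by (simp only: of_real_eq_iff)
qed

lemma norm_scaleC: "norm (a *\<^sub>C (x::'a::complex_inner)) = cmod a * norm x"
proof -
  have "complex_of_real ((norm (a *\<^sub>C x))\<^sup>2) = (a * cnj a) * cinner x x"
    by (simp only: cinner_self[symmetric] cinner_scaleC_left cinner_scaleC_right mult.assoc mult.left_commute)
  also have "\<dots> = complex_of_real ((cmod a * norm x)\<^sup>2)"
    by (simp only: cinner_self complex_norm_square[symmetric] of_real_mult power_mult_distrib)
  finally have "(norm (a *\<^sub>C x))\<^sup>2 = (cmod a * norm x)\<^sup>2" by (simp only: of_real_eq_iff)
  then show ?thesis by (rule power2_eq_imp_eq) simp_all
qed

definition cline :: "'a::complex_inner \<Rightarrow> 'a set" where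
  "cline v = {c *\<^sub>C v | c. True}"

lemma cline_iff: "x \<in> cline v \<longleftrightarrow> (\<exists>c. x = c *\<^sub>C v)"
  by (simp add: cline_def)

lemma cline_self: "v \<in> cline v"
  unfolding cline_iff by (metis scaleC_one)

lemma cspan_singleton: "cspan {v} = cline v"
proof
  show "cspan {v} \<subseteq> cline v"
  proof
    fix x assume "x \<in> cspan {v}"
    then obtain T c where T: "T \<subseteq> {v}" and x: "x = (\<Sum>u\<in>T. c u *\<^sub>C u)"
      by (auto simp: cspan_def)
    show "x \<in> cline v"
    proof (cases "T = {}")
      case True
      then show ?thesis unfolding cline_iff by (intro exI[of _ 0]) (simp add: x)
    next
      case False
      then have "T = {v}" using T by auto
      then show ?thesis unfolding cline_iff by (intro exI[of _ "c v"]) (simp add: x)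
    qed
  qed
  show "cline v \<subseteq> cspan {v}"
  proof
    fix x assume "x \<in> cline v"
    then obtain c where "x = c *\<^sub>C v" by (auto simp: cline_iff)
    then show "x \<in> cspan {v}"
      unfolding cspan_def by (intro CollectI exI[of _ "{v}"] exI[of _ "\<lambda>_. c"]) simp
  qed
qed

lemma cindependent_singleton: "cindependent {v} \<longleftrightarrow> v \<noteq> 0"
proof
  assume indep: "cindependent {v}"
  show "v \<noteq> 0"
  proof
    assume "v = 0"
    define c :: "'a \<Rightarrow> complex" where "c = (\<lambda>_. 1)"
    have "finite {v} \<and> {v} \<subseteq> {v} \<and> (\<Sum>u\<in>{v}. c u *\<^sub>C u) = 0"
      using \<open>v = 0\<close> by simp
    then have "c v = 0"
      by (rule indep[unfolded cindependent_def, rule_format]) simp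
    then show False by (simp add: c_def)
  qed
next
  assume v: "v \<noteq> 0"
  show "cindependent {v}"
    unfolding cindependent_def
  proof (intro allI impI ballI)
    fix T c u assume h: "finite T \<and> T \<subseteq> {v} \<and> (\<Sum>w\<in>T. c w *\<^sub>C w) = 0" and u: "u \<in> T"
    then have "T = {v}" "u = v" by auto
    then show "c u = 0" using h v by (simp add: scaleC_eq_0_iff)
  qed
qed

lemma cdim_eq_1_iff: "cdim_eq V 1 \<longleftrightarrow> (\<exists>v. v \<noteq> 0 \<and> V = cline v)"
proof
  assume "cdim_eq V 1"
  then obtain B where B: "card B = 1" "cindependent B" "cspan B = V" by (auto simp: cdim_eq_def)
  then obtain v where "B = {v}" by (meson card_1_singletonE)
  then show "\<exists>v. v \<noteq> 0 \<and> V = cline v"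
    using B by (auto simp: cindependent_singleton cspan_singleton)
next
  assume "\<exists>v. v \<noteq> 0 \<and> V = cline v"
  then obtain v where "v \<noteq> 0" "V = cline v" by blast
  then show "cdim_eq V 1"
    unfolding cdim_eq_def
    by (intro exI[of _ "{v}"]) (simp add: cindependent_singleton cspan_singleton cline_self)
qed

lemma op_add: "orth_proj P \<Longrightarrow> P (x + y) = P x + P y" unfolding orth_proj_def by blast
lemma op_scale: "orth_proj P \<Longrightarrow> P (a *\<^sub>C x) = a *\<^sub>C P x" unfolding orth_proj_def by blast
lemma op_idem: "orth_proj P \<Longrightarrow> P (P x) = P x" unfolding orth_proj_def by blast
lemma op_adj: "orth_proj P \<Longrightarrow> cinner (P x) y = cinner x (P y)" unfolding orth_proj_def by blast

lemma op_zero: "orth_proj P \<Longrightarrow> P 0 = 0"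
  using op_add[of P 0 0] by simp

lemma op_diff: "orth_proj P \<Longrightarrow> P (x - y) = P x - P y"
  using op_add[of P "x - y" y] by (simp add: eq_diff_eq)

lemma op_perp: "orth_proj P \<Longrightarrow> P (x - P x) = 0"
  by (simp add: op_diff op_idem)

lemma op_adj_perp: "orth_proj P \<Longrightarrow> cinner x (y - P y) = cinner (x - P x) y"
  by (simp add: cinner_diff_left cinner_diff_right op_adj)

lemma op_orth: "orth_proj P \<Longrightarrow> cinner (P y) (x - P x) = 0"
  by (simp add: op_adj op_perp)

lemma op_pythagoras: "orth_proj P \<Longrightarrow> (norm x)\<^sup>2 = (norm (P x))\<^sup>2 + (norm (x - P x))\<^sup>2"
  using pythagoras[OF op_orth[of P x x]] by simp

lemma op_norm: "orth_proj P \<Longrightarrow> norm (P x) \<le> norm x"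
proof -
  assume "orth_proj P"
  then have "(norm (P x))\<^sup>2 \<le> (norm x)\<^sup>2" by (simp add: op_pythagoras[of P x])
  then show ?thesis by (rule power2_le_imp_le) simp
qed

lemma op_norm_perp: "orth_proj P \<Longrightarrow> norm (x - P x) \<le> norm x"
proof -
  assume "orth_proj P"
  then have "(norm (x - P x))\<^sup>2 \<le> (norm x)\<^sup>2" by (simp add: op_pythagoras[of P x])
  then show ?thesis by (rule power2_le_imp_le) simp
qed

text \<open>Ranges of \<open>P\<^sup>\<bottom>\<close> and \<open>P\<close> are orthogonal, so combining pieces of two vectors is
  norm-controlled; this is what keeps the factors of \<open>\<Theta>\<close> and their adjoints in \<open>H\<^sup>2\<close>.\<close>

lemma op_norm_combine: "orth_proj P \<Longrightarrow> (norm ((a - P a) + P b))\<^sup>2 \<le> (norm a)\<^sup>2 + (norm b)\<^sup>2"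
proof -
  assume p: "orth_proj P"
  have "cinner (a - P a) (P b) = 0" using op_orth[OF p, of b a] cinner_commute[of "P b" "a - P a"] by simp
  then have "(norm ((a - P a) + P b))\<^sup>2 = (norm (a - P a))\<^sup>2 + (norm (P b))\<^sup>2" by (rule pythagoras)
  also have "\<dots> \<le> (norm a)\<^sup>2 + (norm b)\<^sup>2"
    using op_norm[OF p, of b] op_norm_perp[OF p, of a] by (intro add_mono power_mono) auto
  finally show ?thesis .
qed

definition line_proj :: "'a::complex_inner \<Rightarrow> 'a \<Rightarrow> 'a" where
  "line_proj v x = (cinner x v / cinner v v) *\<^sub>C v"

lemma line_proj_orth:
  assumes v: "v \<noteq> 0"
  shows "orth_proj (line_proj v)"
proof -
  have vv: "cinner v v \<noteq> 0" and vv_cnj: "cnj (cinner v v) = cinner v v"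
    using v cinner_eq_zero_iff[of v] cinner_commute[of v v] by auto
  have "cinner x (line_proj v y) = cinner x v * cinner v y / cinner v v" for x y
    using cinner_commute[of y v] vv_cnj by (simp add: line_proj_def cinner_scaleC_right)
  then show ?thesis
    unfolding orth_proj_def using vv
    by (simp add: line_proj_def cinner_add_left add_divide_distrib scaleC_add_left
        cinner_scaleC_left scaleC_scaleC)
qed

lemma line_proj_range: "line_proj v x \<in> cline v"
  by (auto simp: line_proj_def cline_iff)

lemma line_proj_fixes_line: "v \<noteq> 0 \<Longrightarrow> x \<in> cline v \<Longrightarrow> line_proj v x = x"
  using cinner_eq_zero_iff[of v] by (auto simp: line_proj_def cline_iff cinner_scaleC_left)

section \<open>The Hardy space of coefficient sequences\<close>

lemma H2_shift_right: "f \<in> H2 \<Longrightarrow> (\<lambda>n. if n = 0 then 0 else f (n - 1)) \<in> H2"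
  unfolding H2_def mem_Collect_eq by (subst summable_Suc_iff[symmetric]) simp

lemma bshift_iter_apply: "(bshift ^^ k) p n = p (n + k)"
  by (induction k arbitrary: n) (simp_all add: bshift_def)

lemma bshift_H2: "f \<in> H2 \<Longrightarrow> bshift f \<in> H2"
  using summable_Suc_iff[of "\<lambda>n. (norm (f n))\<^sup>2"] by (simp add: H2_def bshift_def)

lemma finite_support_H2: "\<forall>n>M. f n = 0 \<Longrightarrow> f \<in> H2"
proof -
  assume h: "\<forall>n>M. f n = 0"
  have "(\<lambda>n. (norm (f n))\<^sup>2) sums (\<Sum>n\<in>{..M}. (norm (f n))\<^sup>2)"
    by (rule sums_finite) (use h in auto)
  then show ?thesis by (auto simp: H2_def sums_summable)
qed

lemma H2_add: "f \<in> H2 \<Longrightarrow> g \<in> H2 \<Longrightarrow> (\<lambda>n. f n + g n) \<in> H2"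
proof -
  assume f: "f \<in> H2" and g: "g \<in> H2"
  have s: "summable (\<lambda>n. 2 * (norm (f n))\<^sup>2 + 2 * (norm (g n))\<^sup>2)"
    using f g by (intro summable_add summable_mult) (auto simp: H2_def)
  show ?thesis unfolding H2_def mem_Collect_eq
  proof (rule summable_comparison_test'[OF s, of 0])
    fix n
    have "(norm (f n + g n))\<^sup>2 \<le> (norm (f n) + norm (g n))\<^sup>2"
      by (intro power_mono norm_triangle_ineq) simp
    also have "\<dots> \<le> 2 * (norm (f n))\<^sup>2 + 2 * (norm (g n))\<^sup>2"
      using zero_le_power2[of "norm (f n) - norm (g n)"] by (simp add: power2_eq_square algebra_simps)
    finally show "norm ((norm (f n + g n))\<^sup>2) \<le> 2 * (norm (f n))\<^sup>2 + 2 * (norm (g n))\<^sup>2" by simp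
  qed
qed

lemma H2_scale: "f \<in> H2 \<Longrightarrow> (\<lambda>n. c *\<^sub>C f n) \<in> H2"
  by (simp add: H2_def norm_scaleC power_mult_distrib summable_mult)

lemma H2_diff: "f \<in> H2 \<Longrightarrow> g \<in> H2 \<Longrightarrow> (\<lambda>n. f n - g n) \<in> H2"
  using H2_add[of f "\<lambda>n. - g n"] by (simp add: H2_def)

lemma norm_le_h2norm: "f \<in> H2 \<Longrightarrow> norm (f k) \<le> h2norm f"
proof -
  assume f: "f \<in> H2"
  have "(\<Sum>n\<in>{k}. (norm (f n))\<^sup>2) \<le> (\<Sum>n. (norm (f n))\<^sup>2)"
    using f by (intro sum_le_suminf) (auto simp: H2_def)
  then show ?thesis unfolding h2norm_def by (simp add: real_le_rsqrt)
qed

lemma summable_cinner: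
  assumes f: "f \<in> H2" and g: "g \<in> H2"
    and bf: "\<And>n. norm (a n) \<le> norm (f n)" and bg: "\<And>n. norm (b n) \<le> norm (g n)"
  shows "summable (\<lambda>n. cinner (a n) (b n))"
proof (rule summable_comparison_test'[of "\<lambda>n. ((norm (f n))\<^sup>2 + (norm (g n))\<^sup>2) / 2" 0])
  show "summable (\<lambda>n. ((norm (f n))\<^sup>2 + (norm (g n))\<^sup>2) / 2)"
    using f g by (intro summable_divide summable_add) (auto simp: H2_def)
  fix n
  have "norm (cinner (a n) (b n)) \<le> ((norm (a n))\<^sup>2 + (norm (b n))\<^sup>2) / 2" by (rule cinner_bound)
  also have "\<dots> \<le> ((norm (f n))\<^sup>2 + (norm (g n))\<^sup>2) / 2"
    using bf[of n] bg[of n] by (intro divide_right_mono add_mono power_mono) auto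
  finally show "norm (cinner (a n) (b n)) \<le> ((norm (f n))\<^sup>2 + (norm (g n))\<^sup>2) / 2" .
qed

lemma h2inner_self_zero:
  assumes f: "f \<in> H2" and z: "h2inner f f = 0"
  shows "f = (\<lambda>n. 0)"
proof -
  have s: "summable (\<lambda>n. (norm (f n))\<^sup>2)" using f by (simp add: H2_def)
  have "h2inner f f = complex_of_real (\<Sum>n. (norm (f n))\<^sup>2)"
    unfolding h2inner_def cinner_self by (rule suminf_of_real[OF s, symmetric])
  then have "(\<Sum>n. (norm (f n))\<^sup>2) = 0" using z by simp
  then show ?thesis using suminf_eq_zero_iff[OF s] by (simp add: fun_eq_iff)
qed

section \<open>The adjoint of multiplication by \<open>\<Theta>\<close>\<close>

definition factor_adj :: "('a::complex_inner \<Rightarrow> 'a) \<Rightarrow> (nat \<Rightarrow> 'a) \<Rightarrow> (nat \<Rightarrow> 'a)" where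
  "factor_adj P f = (\<lambda>n. (f n - P (f n)) + P (f (Suc n)))"

lemma factor_adj_H2:
  assumes p: "orth_proj P" and f: "f \<in> H2"
  shows "factor_adj P f \<in> H2"
proof -
  have s: "summable (\<lambda>n. (norm (f n))\<^sup>2 + (norm (f (Suc n)))\<^sup>2)"
    using f summable_Suc_iff[of "\<lambda>n. (norm (f n))\<^sup>2"] by (intro summable_add) (auto simp: H2_def)
  show ?thesis unfolding H2_def factor_adj_def mem_Collect_eq
    by (rule summable_comparison_test'[OF s, of 0]) (simp add: op_norm_combine[OF p])
qed

lemma mult_factor_H2:
  assumes p: "orth_proj P" and g: "g \<in> H2"
  shows "mult_factor P g \<in> H2"
proof -
  have s: "summable (\<lambda>n. (norm (g n))\<^sup>2 + (norm (if n = 0 then 0 else g (n - 1)))\<^sup>2)"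
    using g H2_shift_right[OF g] by (intro summable_add) (auto simp: H2_def)
  have "(norm (mult_factor P g n))\<^sup>2 \<le> (norm (g n))\<^sup>2 + (norm (if n = 0 then 0 else g (n - 1)))\<^sup>2" for n
  proof -
    have "mult_factor P g n = (g n - P (g n)) + P (if n = 0 then 0 else g (n - 1))"
      by (simp add: mult_factor_def op_zero[OF p])
    then show ?thesis using op_norm_combine[OF p, of "g n" "if n = 0 then 0 else g (n - 1)"] by simp
  qed
  then show ?thesis unfolding H2_def mem_Collect_eq
    by (intro summable_comparison_test'[OF s, of 0]) simp
qed

lemma mult_factor_adjoint:
  assumes p: "orth_proj P" and f: "f \<in> H2" and g: "g \<in> H2"
  shows "h2inner f (mult_factor P g) = h2inner (factor_adj P f) g"
proof -
  define X where "X n = cinner (f n - P (f n)) (g n)" for n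
  define Z where "Z n = cinner (P (f (Suc n))) (g n)" for n
  define Y where "Y n = (if n = 0 then 0 else Z (n - 1))" for n
  have sX: "summable X" unfolding X_def
    by (rule summable_cinner[OF f g]) (auto simp: op_norm_perp[OF p])
  have sZ: "summable Z" unfolding Z_def
    by (rule summable_cinner[OF bshift_H2[OF f] g]) (auto simp: op_norm[OF p] bshift_def)
  have sY: "summable Y" unfolding Y_def by (subst summable_Suc_iff[symmetric]) (simp add: sZ)
  have YZ: "suminf Y = suminf Z"
    using suminf_split_head[OF sY] by (simp add: Y_def)
  have l: "cinner (f n) (mult_factor P g n) = X n + Y n" for n
    by (cases n) (simp_all add: mult_factor_def X_def Y_def Z_def op_adj_perp[OF p]
        cinner_add_right op_adj[OF p])
  have r: "cinner (factor_adj P f n) (g n) = X n + Z n" for n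
    by (simp add: factor_adj_def X_def Z_def cinner_add_left)
  have "h2inner f (mult_factor P g) = suminf X + suminf Y"
    unfolding h2inner_def l by (rule suminf_add[OF sX sY, symmetric])
  also have "\<dots> = suminf X + suminf Z" by (simp add: YZ)
  also have "\<dots> = h2inner (factor_adj P f) g"
    unfolding h2inner_def r by (rule suminf_add[OF sX sZ])
  finally show ?thesis .
qed

definition Theta_prod :: "(nat \<Rightarrow> 'a::complex_inner \<Rightarrow> 'a) \<Rightarrow> nat \<Rightarrow> (nat \<Rightarrow> 'a) \<Rightarrow> (nat \<Rightarrow> 'a)" where
  "Theta_prod P m g = fold (\<lambda>k h. mult_factor (P k) h) [1..<Suc m] g"

definition Theta0_prod :: "(nat \<Rightarrow> 'a::complex_inner \<Rightarrow> 'a) \<Rightarrow> nat \<Rightarrow> 'a \<Rightarrow> 'a" where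
  "Theta0_prod P m x = fold (\<lambda>k y. y - P k y) [1..<Suc m] x"

fun Theta_adj :: "(nat \<Rightarrow> 'a::complex_inner \<Rightarrow> 'a) \<Rightarrow> nat \<Rightarrow> (nat \<Rightarrow> 'a) \<Rightarrow> (nat \<Rightarrow> 'a)" where
  "Theta_adj P 0 f = f"
| "Theta_adj P (Suc m) f = Theta_adj P m (factor_adj (P (Suc m)) f)"

fun Theta0_adj :: "(nat \<Rightarrow> 'a::complex_inner \<Rightarrow> 'a) \<Rightarrow> nat \<Rightarrow> 'a \<Rightarrow> 'a" where
  "Theta0_adj P 0 x = x"
| "Theta0_adj P (Suc m) x = Theta0_adj P m (x - P (Suc m) x)"

lemma Theta_prod_Suc: "Theta_prod P (Suc m) g = mult_factor (P (Suc m)) (Theta_prod P m g)"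
  by (simp add: Theta_prod_def)

lemma Theta0_prod_Suc: "Theta0_prod P (Suc m) x = Theta0_prod P m x - P (Suc m) (Theta0_prod P m x)"
  by (simp add: Theta0_prod_def)

lemma Theta_mult_eq: "Theta_mult P N = Theta_prod P (Suc N)"
  by (simp add: Theta_mult_def Theta_prod_def fun_eq_iff)

lemma Theta0_eq: "Theta0 P N = Theta0_prod P (Suc N)"
  by (simp add: Theta0_def Theta0_prod_def fun_eq_iff)

lemma Theta_adj_cong: "\<forall>k\<in>{1..m}. P k = P' k \<Longrightarrow> Theta_adj P m f = Theta_adj P' m f"
  by (induction m arbitrary: f) auto

lemma Theta0_adj_cong: "\<forall>k\<in>{1..m}. P k = P' k \<Longrightarrow> Theta0_adj P m x = Theta0_adj P' m x"
  by (induction m arbitrary: x) auto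

definition orth_projs :: "(nat \<Rightarrow> 'a::complex_inner \<Rightarrow> 'a) \<Rightarrow> nat \<Rightarrow> bool" where
  "orth_projs P m \<longleftrightarrow> (\<forall>k\<in>{1..m}. orth_proj (P k))"

lemma orth_projs_Suc: "orth_projs P (Suc m) \<longleftrightarrow> orth_projs P m \<and> orth_proj (P (Suc m))"
proof -
  have "{1..Suc m} = insert (Suc m) {1..m}" by auto
  then show ?thesis by (auto simp: orth_projs_def)
qed

lemma Theta_adj_H2: "orth_projs P m \<Longrightarrow> f \<in> H2 \<Longrightarrow> Theta_adj P m f \<in> H2"
  by (induction m arbitrary: f) (simp_all add: orth_projs_Suc factor_adj_H2)

lemma Theta_prod_H2: "orth_projs P m \<Longrightarrow> g \<in> H2 \<Longrightarrow> Theta_prod P m g \<in> H2"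
  by (induction m) (simp_all add: orth_projs_Suc Theta_prod_Suc mult_factor_H2 Theta_prod_def)

lemma Theta_prod_adjoint:
  "orth_projs P m \<Longrightarrow> f \<in> H2 \<Longrightarrow> g \<in> H2 \<Longrightarrow> h2inner f (Theta_prod P m g) = h2inner (Theta_adj P m f) g"
proof (induction m arbitrary: f)
  case (Suc m)
  have p: "orth_projs P m" and q: "orth_proj (P (Suc m))" using Suc.prems(1) by (simp_all add: orth_projs_Suc)
  have "h2inner f (Theta_prod P (Suc m) g) = h2inner (factor_adj (P (Suc m)) f) (Theta_prod P m g)"
    by (simp add: Theta_prod_Suc mult_factor_adjoint[OF q Suc.prems(2) Theta_prod_H2[OF p Suc.prems(3)]])
  also have "\<dots> = h2inner (Theta_adj P m (factor_adj (P (Suc m)) f)) g"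
    by (rule Suc.IH[OF p factor_adj_H2[OF q Suc.prems(2)] Suc.prems(3)])
  finally show ?case by simp
qed (simp add: Theta_prod_def)

lemma Theta0_prod_adjoint:
  "orth_projs P m \<Longrightarrow> cinner (Theta0_prod P m x) y = cinner x (Theta0_adj P m y)"
proof (induction m arbitrary: y)
  case (Suc m)
  have p: "orth_projs P m" and q: "orth_proj (P (Suc m))" using Suc.prems(1) by (simp_all add: orth_projs_Suc)
  have "cinner (Theta0_prod P (Suc m) x) y = cinner (Theta0_prod P m x) (y - P (Suc m) y)"
    by (simp add: Theta0_prod_Suc op_adj_perp[OF q])
  also have "\<dots> = cinner x (Theta0_adj P (Suc m) y)" by (simp add: Suc.IH[OF p])
  finally show ?case .
qed (simp add: Theta0_prod_def)

lemma adjoint_unique: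
  assumes TS: "\<forall>x y. cinner (T x) y = cinner x (S y)"
  shows "adjoint T = S"
  unfolding adjoint_def
proof (rule the_equality)
  fix S' assume TS': "\<forall>x y. cinner (T x) y = cinner x (S' y)"
  show "S' = S"
  proof
    fix y
    have "cinner (S' y - S y) (S' y - S y) = 0"
      using TS TS' by (simp add: cinner_diff_right)
    then show "S' y = S y" using cinner_eq_zero_iff[of "S' y - S y"] by simp
  qed
qed (rule TS)

lemma adjoint_Theta0: "orth_projs P (Suc N) \<Longrightarrow> adjoint (Theta0 P N) = Theta0_adj P (Suc N)"
  unfolding Theta0_eq by (rule adjoint_unique) (simp add: Theta0_prod_adjoint)

section \<open>The model space \<open>H\<^sup>2 \<ominus> \<Theta>H\<^sup>2\<close>\<close>

definition model_space :: "(nat \<Rightarrow> 'a::complex_inner \<Rightarrow> 'a) \<Rightarrow> nat \<Rightarrow> (nat \<Rightarrow> 'a) set" where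
  "model_space P m = {f \<in> H2. Theta_adj P m f = (\<lambda>n. 0)}"

lemma orth_compl_Theta_range:
  assumes p: "orth_projs P m"
  shows "h2_orth_compl (Theta_prod P m ` H2) = model_space P m"
proof
  show "h2_orth_compl (Theta_prod P m ` H2) \<subseteq> model_space P m"
  proof
    fix f assume "f \<in> h2_orth_compl (Theta_prod P m ` H2)"
    then have f: "f \<in> H2" and orth: "\<And>g. g \<in> H2 \<Longrightarrow> h2inner f (Theta_prod P m g) = 0"
      by (auto simp: h2_orth_compl_def)
    have t: "Theta_adj P m f \<in> H2" by (rule Theta_adj_H2[OF p f])
    have "h2inner (Theta_adj P m f) (Theta_adj P m f) = 0"
      using orth[OF t] Theta_prod_adjoint[OF p f t] by simp
    then show "f \<in> model_space P m" using h2inner_self_zero[OF t] f by (simp add: model_space_def)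
  qed
  show "model_space P m \<subseteq> h2_orth_compl (Theta_prod P m ` H2)"
    using Theta_prod_adjoint[OF p] by (auto simp: h2_orth_compl_def model_space_def h2inner_def)
qed

lemma factor_adj_add:
  "orth_proj Q \<Longrightarrow> factor_adj Q (\<lambda>n. f n + g n) = (\<lambda>n. factor_adj Q f n + factor_adj Q g n)"
  by (simp add: factor_adj_def fun_eq_iff op_add algebra_simps)

lemma factor_adj_scale:
  "orth_proj Q \<Longrightarrow> factor_adj Q (\<lambda>n. c *\<^sub>C f n) = (\<lambda>n. c *\<^sub>C factor_adj Q f n)"
  by (simp add: factor_adj_def fun_eq_iff op_scale scaleC_add_right scaleC_diff_right)

lemma factor_adj_diff:
  "orth_proj Q \<Longrightarrow> factor_adj Q (\<lambda>n. f n - g n) = (\<lambda>n. factor_adj Q f n - factor_adj Q g n)"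
  by (simp add: factor_adj_def fun_eq_iff op_diff algebra_simps)

lemma Theta_adj_add:
  "orth_projs P m \<Longrightarrow> Theta_adj P m (\<lambda>n. f n + g n) = (\<lambda>n. Theta_adj P m f n + Theta_adj P m g n)"
  by (induction m arbitrary: f g) (simp_all add: orth_projs_Suc factor_adj_add)

lemma Theta_adj_scale:
  "orth_projs P m \<Longrightarrow> Theta_adj P m (\<lambda>n. c *\<^sub>C f n) = (\<lambda>n. c *\<^sub>C Theta_adj P m f n)"
  by (induction m arbitrary: f) (simp_all add: orth_projs_Suc factor_adj_scale)

lemma Theta_adj_diff:
  "orth_projs P m \<Longrightarrow> Theta_adj P m (\<lambda>n. f n - g n) = (\<lambda>n. Theta_adj P m f n - Theta_adj P m g n)"
  by (induction m arbitrary: f g) (simp_all add: orth_projs_Suc factor_adj_diff)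

lemma Theta_adj_zero: "orth_projs P m \<Longrightarrow> Theta_adj P m (\<lambda>n. 0) = (\<lambda>n. 0)"
  using Theta_adj_diff[of P m "\<lambda>n. 0" "\<lambda>n. 0"] by simp

lemma Theta0_adj_zero: "orth_projs P m \<Longrightarrow> Theta0_adj P m 0 = 0"
  by (induction m) (simp_all add: orth_projs_Suc op_zero)

lemma factor_adj_shift: "bshift (factor_adj Q f) = factor_adj Q (bshift f)"
  by (simp add: bshift_def factor_adj_def)

lemma Theta_adj_shift: "Theta_adj P m (bshift f) = bshift (Theta_adj P m f)"
  by (induction m arbitrary: f) (simp_all add: factor_adj_shift[symmetric])

lemma Theta_adj_const:
  "orth_projs P m \<Longrightarrow> Theta_adj P m (\<lambda>n. if n = 0 then x else 0) = (\<lambda>n. if n = 0 then Theta0_adj P m x else 0)"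
proof (induction m arbitrary: x)
  case (Suc m)
  have p: "orth_projs P m" and q: "orth_proj (P (Suc m))" using Suc.prems by (simp_all add: orth_projs_Suc)
  have "factor_adj (P (Suc m)) (\<lambda>n. if n = 0 then x else 0) = (\<lambda>n. if n = 0 then x - P (Suc m) x else 0)"
    by (auto simp: factor_adj_def fun_eq_iff op_zero[OF q])
  then show ?case by (simp only: Theta_adj.simps Theta0_adj.simps Suc.IH[OF p] cong: if_cong)
qed (simp add: fun_eq_iff)

lemma factor_adj_vanish:
  assumes q: "orth_proj Q" and h: "\<forall>n\<ge>j. factor_adj Q f n = 0"
  shows "\<forall>n\<ge>Suc j. f n = 0"
proof (intro allI impI)
  have top: "Q (f (Suc n)) = 0" if "n \<ge> j" for n
  proof -
    have "Q (factor_adj Q f n) = 0" using h that op_zero[OF q] by simp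
    then show ?thesis by (simp add: factor_adj_def op_add[OF q] op_perp[OF q] op_idem[OF q])
  qed
  fix n assume n: "Suc j \<le> n"
  have "f n - Q (f n) = 0" using h[rule_format, of n] top[of n] n by (simp add: factor_adj_def)
  moreover have "Q (f n) = 0" using top[of "n - 1"] n by (cases n) auto
  ultimately show "f n = 0" by simp
qed

lemma Theta_adj_vanish:
  "orth_projs P m \<Longrightarrow> \<forall>n\<ge>j. Theta_adj P m f n = 0 \<Longrightarrow> \<forall>n\<ge>j + m. f n = 0"
proof (induction m arbitrary: f)
  case (Suc m)
  have p: "orth_projs P m" and q: "orth_proj (P (Suc m))" using Suc.prems(1) by (simp_all add: orth_projs_Suc)
  have "\<forall>n\<ge>j + m. factor_adj (P (Suc m)) f n = 0" using Suc.IH[OF p] Suc.prems(2) by simp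
  then show ?case using factor_adj_vanish[OF q] by simp
qed simp

lemma Theta_adj_bound:
  "orth_projs P m \<Longrightarrow> \<forall>k. norm (f k) \<le> r \<Longrightarrow> norm (Theta_adj P m f n) \<le> 2 ^ m * r"
proof (induction m arbitrary: f r)
  case (Suc m)
  have p: "orth_projs P m" and q: "orth_proj (P (Suc m))" using Suc.prems(1) by (simp_all add: orth_projs_Suc)
  have "norm (factor_adj (P (Suc m)) f k) \<le> 2 * r" for k
  proof -
    have "norm (factor_adj (P (Suc m)) f k) \<le> norm (f k - P (Suc m) (f k)) + norm (P (Suc m) (f (Suc k)))"
      unfolding factor_adj_def by (rule norm_triangle_ineq)
    also have "\<dots> \<le> norm (f k) + norm (f (Suc k))"
      using op_norm[OF q] op_norm_perp[OF q] by (intro add_mono) auto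
    also have "\<dots> \<le> 2 * r" using Suc.prems(2) by (simp add: add_mono[of _ r _ r, simplified])
    finally show ?thesis .
  qed
  then have "norm (Theta_adj P m (factor_adj (P (Suc m)) f) n) \<le> 2 ^ m * (2 * r)"
    by (intro Suc.IH[OF p]) simp
  then show ?case by (simp add: mult.assoc mult.left_commute)
qed simp

text \<open>The model space is closed: a coefficient of \<open>\<Theta>\<^sup>*f\<close> is controlled by \<open>\<parallel>f - g\<parallel>\<close>
  for any \<open>g\<close> in the model space.\<close>

lemma model_space_closed: "orth_projs P m \<Longrightarrow> h2_closure (model_space P m) = model_space P m"
proof
  assume p: "orth_projs P m"
  show "h2_closure (model_space P m) \<subseteq> model_space P m"
  proof
    fix f assume f: "f \<in> h2_closure (model_space P m)"
    then have fH: "f \<in> H2" and approx: "\<And>e. e > 0 \<Longrightarrow> \<exists>g\<in>model_space P m. h2norm (\<lambda>n. f n - g n) < e"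
      by (auto simp: h2_closure_def)
    have "Theta_adj P m f n = 0" for n
    proof (rule ccontr)
      assume ne: "Theta_adj P m f n \<noteq> 0"
      define e where "e = norm (Theta_adj P m f n) / 2 ^ m"
      have e: "e > 0" using ne by (simp add: e_def)
      obtain g where g: "g \<in> H2" "Theta_adj P m g = (\<lambda>n. 0)" "h2norm (\<lambda>n. f n - g n) < e"
        using approx[OF e] by (auto simp: model_space_def)
      have d: "(\<lambda>n. f n - g n) \<in> H2" by (rule H2_diff[OF fH g(1)])
      have "norm (Theta_adj P m f n) = norm (Theta_adj P m (\<lambda>n. f n - g n) n)"
        using Theta_adj_diff[OF p, of f g] g(2) by simp
      also have "\<dots> \<le> 2 ^ m * h2norm (\<lambda>n. f n - g n)"
        by (rule Theta_adj_bound[OF p]) (auto intro: norm_le_h2norm[OF d])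
      also have "\<dots> < 2 ^ m * e" using g(3) by simp
      also have "\<dots> = norm (Theta_adj P m f n)" by (simp add: e_def)
      finally show False by simp
    qed
    then show "f \<in> model_space P m" using fH by (auto simp: model_space_def)
  qed
  show "model_space P m \<subseteq> h2_closure (model_space P m)"
  proof
    fix f assume "f \<in> model_space P m"
    moreover have "h2norm (\<lambda>n. f n - f n) = 0" by (simp add: h2norm_def)
    ultimately show "f \<in> h2_closure (model_space P m)"
      by (auto simp: h2_closure_def model_space_def intro!: bexI[of _ f])
  qed
qed

lemma model_space_shift: "f \<in> model_space P m \<Longrightarrow> bshift f \<in> model_space P m"
  using bshift_H2 Theta_adj_shift[of P m f] by (auto simp: model_space_def bshift_def)

lemma model_space_shift_iter: "f \<in> model_space P m \<Longrightarrow> (bshift ^^ k) f \<in> model_space P m"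
  by (induction k) (simp_all add: model_space_shift)

lemma model_space_degree: "orth_projs P m \<Longrightarrow> f \<in> model_space P m \<Longrightarrow> m \<le> n \<Longrightarrow> f n = 0"
  using Theta_adj_vanish[of P m 0 f] by (simp add: model_space_def)

lemma model_space_top_coeff:
  assumes p: "orth_projs P m" and f: "f \<in> model_space P m" and deg: "\<forall>n\<ge>Suc k. f n = 0"
  shows "Theta0_adj P m (f k) = 0"
proof -
  have "(bshift ^^ k) f = (\<lambda>n. if n = 0 then f k else 0)"
    using deg by (auto simp: fun_eq_iff bshift_iter_apply)
  then have "(\<lambda>n. if n = 0 then f k else 0) \<in> model_space P m"
    using model_space_shift_iter[OF f, of k] by simp
  then have "Theta_adj P m (\<lambda>n. if n = 0 then f k else 0) = (\<lambda>n. 0)"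
    by (simp add: model_space_def)
  then have "(\<lambda>n::nat. if n = 0 then Theta0_adj P m (f k) else 0) = (\<lambda>n. 0)"
    by (simp only: Theta_adj_const[OF p])
  then show ?thesis by (metis (mono_tags))
qed

text \<open>Coefficientwise complex scaling makes all sequences a complex vector space; its
  span and independence notions are those used in the statement.\<close>

definition seq_scale :: "complex \<Rightarrow> (nat \<Rightarrow> 'a::complex_inner) \<Rightarrow> (nat \<Rightarrow> 'a)" where
  "seq_scale c f = (\<lambda>n. c *\<^sub>C f n)"

interpretation vs: vector_space "seq_scale :: complex \<Rightarrow> (nat \<Rightarrow> 'a::complex_inner) \<Rightarrow> nat \<Rightarrow> 'a"
  by unfold_locales
    (simp_all add: seq_scale_def fun_eq_iff scaleC_add_right scaleC_add_left scaleC_scaleC scaleC_one)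

lemma sum_apply_fun: "(\<Sum>v\<in>T. h v) (n::nat) = (\<Sum>v\<in>T. h v n)"
  by (induction T rule: infinite_finite_induct) simp_all

lemma sum_seq_scale: "(\<Sum>v\<in>T. seq_scale (c v) v) = (\<lambda>n. \<Sum>v\<in>T. c v *\<^sub>C v n)"
  by (simp add: fun_eq_iff sum_apply_fun seq_scale_def)

lemma seq_cspan_eq: "seq_cspan S = vs.span S"
  unfolding seq_cspan_def vs.span_explicit sum_seq_scale by blast

lemma seq_cindependent_eq: "seq_cindependent S \<longleftrightarrow> vs.independent S"
  unfolding seq_cindependent_def vs.dependent_explicit sum_seq_scale
  by (auto simp: fun_eq_iff)

lemma span_image_subspace:
  fixes L :: "(nat \<Rightarrow> 'a::complex_inner) \<Rightarrow> (nat \<Rightarrow> 'a)"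
  assumes add: "\<And>x y. L (\<lambda>n. x n + y n) = (\<lambda>n. L x n + L y n)"
    and scale: "\<And>c x. L (\<lambda>n. c *\<^sub>C x n) = (\<lambda>n. c *\<^sub>C L x n)"
    and V: "vs.subspace V" and S: "\<And>x. x \<in> S \<Longrightarrow> L x \<in> V" and x: "x \<in> vs.span S"
  shows "L x \<in> V"
proof -
  have "vs.span S \<subseteq> {x. L x \<in> V}"
  proof (rule vs.span_minimal)
    show "S \<subseteq> {x. L x \<in> V}" using S by blast
    have "L (\<lambda>n. 0) = (\<lambda>n. 0)" using scale[of 0 "\<lambda>n. 0"] by simp
    then show "vs.subspace {x. L x \<in> V}"
      using V unfolding vs.subspace_def plus_fun_def zero_fun_def seq_scale_def
      by (simp add: add scale)
  qed
  then show ?thesis using x by blast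
qed

lemma subspace_vanishing: "vs.subspace {f :: nat \<Rightarrow> 'a::complex_inner. \<forall>n\<in>A. f n = 0}"
  unfolding vs.subspace_def by (simp add: seq_scale_def)

lemma model_space_subspace: "orth_projs P m \<Longrightarrow> vs.subspace (model_space P m)"
  unfolding vs.subspace_def model_space_def plus_fun_def zero_fun_def seq_scale_def
  using finite_support_H2[of 0 "\<lambda>n. 0"]
  by (auto simp: H2_add H2_scale Theta_adj_add Theta_adj_scale Theta_adj_zero)

definition orbit :: "(nat \<Rightarrow> 'a) \<Rightarrow> (nat \<Rightarrow> 'a) set" where
  "orbit p = {(bshift ^^ k) p | k. True}"

definition orbit_upto :: "nat \<Rightarrow> (nat \<Rightarrow> 'a) \<Rightarrow> (nat \<Rightarrow> 'a) set" where
  "orbit_upto N p = {(bshift ^^ k) p | k. k \<le> N}"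

lemma E_orbit: "E p = h2_closure (vs.span (orbit p))"
  by (simp add: E_def orbit_def seq_cspan_eq)

lemma orbit_self: "p \<in> orbit p"
  unfolding orbit_def by (intro CollectI exI[of _ 0]) simp

lemma orbit_shift_iter: "(bshift ^^ k) p \<in> orbit p"
  unfolding orbit_def by blast

lemma orbit_upto_finite: "finite (orbit_upto N p)"
proof -
  have "orbit_upto N p = (\<lambda>k. (bshift ^^ k) p) ` {..N}" by (auto simp: orbit_upto_def)
  then show ?thesis by simp
qed

lemma orbit_upto_subset: "orbit_upto N p \<subseteq> orbit p"
  by (auto simp: orbit_upto_def orbit_def)

lemma shift_iter_Suc: "(bshift ^^ Suc j) p = (bshift ^^ j) (bshift p)"
  by (simp only: funpow_Suc_right o_apply)

lemma orbit_upto_Suc: "orbit_upto (Suc N) p = insert p (orbit_upto N (bshift p))"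
proof
  show "orbit_upto (Suc N) p \<subseteq> insert p (orbit_upto N (bshift p))"
  proof
    fix f assume "f \<in> orbit_upto (Suc N) p"
    then obtain k where k: "f = (bshift ^^ k) p" "k \<le> Suc N" by (auto simp: orbit_upto_def)
    show "f \<in> insert p (orbit_upto N (bshift p))"
    proof (cases k)
      case 0 then show ?thesis using k by simp
    next
      case (Suc j)
      then have "f = (bshift ^^ j) (bshift p)" "j \<le> N" using k shift_iter_Suc by auto
      then show ?thesis unfolding orbit_upto_def by blast
    qed
  qed
  have "p \<in> orbit_upto (Suc N) p"
    unfolding orbit_upto_def by (intro CollectI exI[of _ 0]) simp
  moreover have "(bshift ^^ j) (bshift p) \<in> orbit_upto (Suc N) p" if "j \<le> N" for j
    unfolding orbit_upto_def using that by (intro CollectI exI[of _ "Suc j"]) (simp only: shift_iter_Suc, simp)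
  ultimately show "insert p (orbit_upto N (bshift p)) \<subseteq> orbit_upto (Suc N) p"
    unfolding orbit_upto_def[of N] by blast
qed

lemma orbit_span_shift: "f \<in> vs.span (orbit p) \<Longrightarrow> bshift f \<in> vs.span (orbit p)"
proof (rule span_image_subspace[where L = bshift and V = "vs.span (orbit p)" and S = "orbit p"])
  fix x assume "x \<in> orbit p"
  then obtain k where "x = (bshift ^^ k) p" by (auto simp: orbit_def)
  then have "bshift x = (bshift ^^ Suc k) p" by simp
  then show "bshift x \<in> vs.span (orbit p)" by (simp only:) (rule vs.span_base[OF orbit_shift_iter])
qed (simp_all add: bshift_def)

text \<open>For \<open>p\<close> of degree \<open>N\<close>, the shifts \<open>p, S\<^sup>*p, \<dots>, S\<^sup>*\<^sup>Np\<close> are independent (their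
  degrees are distinct) and span the orbit (later shifts vanish).\<close>

lemma orbit_upto_independent:
  "is_poly_deg p N \<Longrightarrow> vs.independent (orbit_upto N p) \<and> card (orbit_upto N p) = Suc N"
proof (induction N arbitrary: p)
  case 0
  then have "p \<noteq> (\<lambda>n. 0)" by (auto simp: is_poly_deg_def fun_eq_iff)
  moreover have "orbit_upto 0 p = {p}" by (auto simp: orbit_upto_def)
  ultimately show ?case using vs.dependent_single[of p] by (simp add: zero_fun_def)
next
  case (Suc N)
  have deg: "is_poly_deg (bshift p) N" using Suc.prems by (auto simp: is_poly_deg_def bshift_def)
  have "vs.span (orbit_upto N (bshift p)) \<subseteq> {f. \<forall>n\<in>{Suc N}. f n = 0}"
    by (rule vs.span_minimal[OF _ subspace_vanishing])
      (use Suc.prems in \<open>auto simp: orbit_upto_def bshift_iter_apply is_poly_deg_def bshift_def\<close>)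
  then have "p \<notin> vs.span (orbit_upto N (bshift p))" using Suc.prems by (auto simp: is_poly_deg_def)
  then show ?case
    using Suc.IH[OF deg] orbit_upto_finite[of N "bshift p"] vs.span_superset
    by (auto simp: orbit_upto_Suc vs.independent_insert)
qed

lemma orbit_span_eq_upto: "is_poly_deg p N \<Longrightarrow> vs.span (orbit p) = vs.span (orbit_upto N p)"
proof -
  assume p: "is_poly_deg p N"
  have "(bshift ^^ k) p = 0" if "N < k" for k
    using p that by (auto simp: fun_eq_iff bshift_iter_apply is_poly_deg_def)
  have "orbit p \<subseteq> insert 0 (orbit_upto N p)"
  proof
    fix f assume "f \<in> orbit p"
    then obtain k where f: "f = (bshift ^^ k) p" by (auto simp: orbit_def)
    show "f \<in> insert 0 (orbit_upto N p)"
    proof (cases "k \<le> N")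
      case True then show ?thesis using f by (auto simp: orbit_upto_def)
    next
      case False then show ?thesis using f \<open>N < k \<Longrightarrow> _\<close> by simp
    qed
  qed
  then have "vs.span (orbit p) \<subseteq> vs.span (orbit_upto N p)"
    using vs.span_mono vs.span_insert_0 by metis
  then show ?thesis using vs.span_mono[OF orbit_upto_subset] by blast
qed

lemma orbit_span_dim: "is_poly_deg p N \<Longrightarrow> seq_cdim_eq (vs.span (orbit p)) (Suc N)"
  unfolding seq_cdim_eq_def seq_cindependent_eq seq_cspan_eq
  using orbit_upto_independent[of p N] orbit_upto_finite[of N p] orbit_span_eq_upto[of p N]
    vs.span_mono[OF orbit_upto_subset, of N p] vs.span_superset[of "orbit_upto N p"]
  by (intro exI[of _ "orbit_upto N p"]) auto

lemma orbit_span_H2: "is_poly_deg p N \<Longrightarrow> vs.span (orbit p) \<subseteq> H2"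
proof -
  assume p: "is_poly_deg p N"
  have "vs.span (orbit p) \<subseteq> {f. \<forall>n\<in>{N<..}. f n = 0}"
    by (rule vs.span_minimal[OF _ subspace_vanishing])
      (use p in \<open>auto simp: orbit_def bshift_iter_apply is_poly_deg_def\<close>)
  then show ?thesis by (intro subsetI finite_support_H2[of N]) auto
qed

section \<open>(i) implies (ii): projections for a given polynomial\<close>

lemma mult_factor_factor_adj:
  assumes q: "orth_proj Q"
  shows "mult_factor Q (factor_adj Q f) = (\<lambda>n. f n - (if n = 0 then Q (f 0) else 0))"
proof
  fix n
  have Q_adj: "Q (factor_adj Q f k) = Q (f (Suc k))" for k
    unfolding factor_adj_def by (simp only: op_add[OF q] op_perp[OF q] op_idem[OF q]) simp
  have perp_adj: "factor_adj Q f k - Q (factor_adj Q f k) = f k - Q (f k)" for k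
    unfolding Q_adj by (simp add: factor_adj_def)
  show "mult_factor Q (factor_adj Q f) n = f n - (if n = 0 then Q (f 0) else 0)"
  proof (cases n)
    case 0 then show ?thesis unfolding mult_factor_def by (simp only: perp_adj) simp
  next
    case (Suc j) then show ?thesis unfolding mult_factor_def by (simp only: perp_adj) (simp add: Q_adj)
  qed
qed

lemma mult_factor_shift:
  "mult_factor Q (bshift h) = (\<lambda>n. bshift (mult_factor Q h) n - (if n = 0 then Q (h 0) else 0))"
  by (rule ext, case_tac n) (simp_all add: mult_factor_def bshift_def)

lemma mult_factor_add:
  "orth_proj Q \<Longrightarrow> mult_factor Q (\<lambda>n. f n + g n) = (\<lambda>n. mult_factor Q f n + mult_factor Q g n)"
  by (simp add: mult_factor_def fun_eq_iff op_add op_zero algebra_simps)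

lemma mult_factor_scale:
  "orth_proj Q \<Longrightarrow> mult_factor Q (\<lambda>n. c *\<^sub>C f n) = (\<lambda>n. c *\<^sub>C mult_factor Q f n)"
  by (simp add: mult_factor_def fun_eq_iff op_scale scaleC_add_right scaleC_diff_right)

lemma factor_adj_shift_iter: "factor_adj Q ((bshift ^^ k) f) = (bshift ^^ k) (factor_adj Q f)"
  by (induction k) (simp_all add: factor_adj_shift[symmetric])

lemma span_add_seq: "x \<in> vs.span S \<Longrightarrow> y \<in> vs.span S \<Longrightarrow> (\<lambda>n. x n + y n) \<in> vs.span S"
  using vs.span_add[of x S y] by (simp add: plus_fun_def)

lemma span_diff_seq: "x \<in> vs.span S \<Longrightarrow> y \<in> vs.span S \<Longrightarrow> (\<lambda>n. x n - y n) \<in> vs.span S"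
  using vs.span_diff[of x S y] by (simp add: fun_diff_def)

lemma factor_adj_orbit_span:
  assumes q: "orth_proj Q" and f: "f \<in> vs.span (orbit p)"
  shows "factor_adj Q f \<in> vs.span (orbit (factor_adj Q p))"
proof (rule span_image_subspace[OF factor_adj_add[OF q] factor_adj_scale[OF q] vs.subspace_span _ f])
  fix x assume "x \<in> orbit p"
  then obtain k where "x = (bshift ^^ k) p" by (auto simp: orbit_def)
  then have "factor_adj Q x = (bshift ^^ k) (factor_adj Q p)" by (simp add: factor_adj_shift_iter)
  then show "factor_adj Q x \<in> vs.span (orbit (factor_adj Q p))"
    by (simp add: vs.span_base orbit_shift_iter)
qed

lemma mult_factor_orbit_span:
  assumes q: "orth_proj Q"
    and const: "\<And>x. (\<lambda>n. if n = 0 then Q x else 0) \<in> vs.span (orbit p)"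
    and g: "g \<in> vs.span (orbit (factor_adj Q p))"
  shows "mult_factor Q g \<in> vs.span (orbit p)"
proof (rule span_image_subspace[OF mult_factor_add[OF q] mult_factor_scale[OF q] vs.subspace_span _ g])
  have "mult_factor Q ((bshift ^^ k) (factor_adj Q p)) \<in> vs.span (orbit p)" for k
  proof (induction k)
    case 0
    show ?case
      using span_diff_seq[OF vs.span_base[OF orbit_self] const] by (simp add: mult_factor_factor_adj[OF q])
  next
    case (Suc k)
    show ?case
      using span_diff_seq[OF orbit_span_shift[OF Suc.IH] const] by (simp add: mult_factor_shift)
  qed
  then show "mult_factor Q x \<in> vs.span (orbit p)" if "x \<in> orbit (factor_adj Q p)" for x
    using that by (auto simp: orbit_def)
qed

lemma orbit_span_preimage:
  assumes q: "orth_proj Q"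
    and const: "\<And>x. (\<lambda>n. if n = 0 then Q x else 0) \<in> vs.span (orbit p)"
    and H: "vs.span (orbit p) \<subseteq> H2"
  shows "{f \<in> H2. factor_adj Q f \<in> vs.span (orbit (factor_adj Q p))} = vs.span (orbit p)"
proof
  show "{f \<in> H2. factor_adj Q f \<in> vs.span (orbit (factor_adj Q p))} \<subseteq> vs.span (orbit p)"
  proof
    fix f assume "f \<in> {f \<in> H2. factor_adj Q f \<in> vs.span (orbit (factor_adj Q p))}"
    then have "mult_factor Q (factor_adj Q f) \<in> vs.span (orbit p)"
      by (simp add: mult_factor_orbit_span[OF q const])
    moreover have "(\<lambda>n. mult_factor Q (factor_adj Q f) n + (if n = 0 then Q (f 0) else 0)) = f"
      by (simp add: mult_factor_factor_adj[OF q] fun_eq_iff)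
    ultimately show "f \<in> vs.span (orbit p)" using span_add_seq const by metis
  qed
  show "vs.span (orbit p) \<subseteq> {f \<in> H2. factor_adj Q f \<in> vs.span (orbit (factor_adj Q p))}"
    using H factor_adj_orbit_span[OF q] by blast
qed

lemma leading_constants_in_orbit_span:
  assumes pz: "\<forall>n\<ge>Suc m. p n = 0" and x: "x \<in> cline (p m)"
  shows "(\<lambda>n. if n = 0 then x else 0) \<in> vs.span (orbit p)"
proof -
  obtain c where c: "x = c *\<^sub>C p m" using x by (auto simp: cline_iff)
  have "(bshift ^^ m) p = (\<lambda>n. if n = 0 then p m else 0)"
    using pz by (auto simp: fun_eq_iff bshift_iter_apply)
  then have "(\<lambda>n. if n = 0 then x else 0) = seq_scale c ((bshift ^^ m) p)"
    by (simp add: c seq_scale_def fun_eq_iff)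
  then show ?thesis by (simp add: vs.span_scale vs.span_base orbit_shift_iter)
qed

lemma factor_adj_lowers_degree:
  assumes pz: "\<forall>n\<ge>Suc m. p n = 0" and v: "p m \<noteq> 0"
  shows "\<forall>n\<ge>m. factor_adj (line_proj (p m)) p n = 0"
    and "0 < m \<Longrightarrow> line_proj (p m) (factor_adj (line_proj (p m)) p (m - 1)) = p m"
proof -
  let ?Q = "line_proj (p m)"
  have q: "orth_proj ?Q" by (rule line_proj_orth[OF v])
  have Qv: "?Q (p m) = p m" by (rule line_proj_fixes_line[OF v cline_self])
  show "\<forall>n\<ge>m. factor_adj ?Q p n = 0"
  proof (intro allI impI)
    fix n assume "m \<le> n"
    then show "factor_adj ?Q p n = 0"
      using pz by (cases "n = m") (simp_all add: factor_adj_def op_zero[OF q] Qv)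
  qed
  assume "0 < m"
  then have "Suc (m - 1) = m" by simp
  then show "?Q (factor_adj ?Q p (m - 1)) = p m"
    by (simp add: factor_adj_def op_add[OF q] op_perp[OF q] op_idem[OF q] Qv)
qed

lemma Theta0_adj_step_kernel:
  assumes P: "orth_projs P m" and v: "v \<noteq> 0"
    and K: "{x. Theta0_adj P m x = 0} = (if m = 0 then {0} else cline w)"
    and w: "0 < m \<Longrightarrow> line_proj v w = v"
  shows "{x. Theta0_adj P m (x - line_proj v x) = 0} = cline v"
proof -
  let ?Q = "line_proj v"
  have q: "orth_proj ?Q" by (rule line_proj_orth[OF v])
  have fixed: "x - ?Q x = 0" if x: "Theta0_adj P m (x - ?Q x) = 0" for x
  proof (cases "m = 0")
    case True
    then show ?thesis using x by (simp only: True Theta0_adj.simps)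
  next
    case False
    have "x - ?Q x \<in> {x. Theta0_adj P m x = 0}" using x by (rule CollectI)
    then have "x - ?Q x \<in> cline w" unfolding K using False by (simp only: if_False)
    then obtain c where c: "x - ?Q x = c *\<^sub>C w" by (auto simp: cline_iff)
    have "c *\<^sub>C v = ?Q (x - ?Q x)" using w False by (simp add: c op_scale[OF q])
    then have "c = 0" using v op_perp[OF q, of x] by (simp add: scaleC_eq_0_iff)
    then show ?thesis using c by (simp only: scaleC_zero_left)
  qed
  show ?thesis
  proof
    show "{x. Theta0_adj P m (x - ?Q x) = 0} \<subseteq> cline v"
    proof
      fix x assume "x \<in> {x. Theta0_adj P m (x - ?Q x) = 0}"
      then have "x - ?Q x = 0" by (intro fixed) simp
      then have "x = ?Q x" by (simp only: right_minus_eq)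
      then show "x \<in> cline v" using line_proj_range[of v x] by metis
    qed
    show "cline v \<subseteq> {x. Theta0_adj P m (x - ?Q x) = 0}"
      using Theta0_adj_zero[OF P] line_proj_fixes_line[OF v] by auto
  qed
qed

lemma orth_projs_extend: "orth_projs P m \<Longrightarrow> orth_proj Q \<Longrightarrow> orth_projs (P(Suc m := Q)) (Suc m)"
  by (auto simp: orth_projs_def)

lemma Theta_adj_extend: "Theta_adj (P(Suc m := Q)) (Suc m) f = Theta_adj P m (factor_adj Q f)"
  by (simp add: Theta_adj_cong[of m "P(Suc m := Q)" P])

lemma Theta0_adj_extend: "Theta0_adj (P(Suc m := Q)) (Suc m) x = Theta0_adj P m (x - Q x)"
  by (simp add: Theta0_adj_cong[of m "P(Suc m := Q)" P])

lemma polynomial_projections: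
  fixes p :: "nat \<Rightarrow> 'a::complex_inner"
  assumes "\<forall>n\<ge>m. p n = 0" and "0 < m \<Longrightarrow> p (m - 1) \<noteq> 0"
  shows "\<exists>P. orth_projs P m \<and> model_space P m = vs.span (orbit p) \<and>
             {x. Theta0_adj P m x = 0} = (if m = 0 then {0} else cline (p (m - 1)))"
  using assms
proof (induction m arbitrary: p)
  case 0
  then have "(bshift ^^ k) p = 0" for k by (simp add: fun_eq_iff bshift_iter_apply)
  then have "orbit p = {0}" by (auto simp: orbit_def)
  then have "vs.span (orbit p) = {\<lambda>n. 0}" using vs.span_insert_0[of "{}"] by (simp add: zero_fun_def)
  moreover have "(\<lambda>n. 0) \<in> (H2 :: (nat \<Rightarrow> 'a) set)" by (rule finite_support_H2[of 0]) simp
  ultimately show ?case by (auto simp: orth_projs_def model_space_def)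
next
  case (Suc m)
  let ?Q = "line_proj (p m)"
  have pz: "\<forall>n\<ge>Suc m. p n = 0" and v: "p m \<noteq> 0" using Suc.prems by auto
  have q: "orth_proj ?Q" by (rule line_proj_orth[OF v])
  note deg = factor_adj_lowers_degree[OF pz v]
  have lead: "factor_adj ?Q p (m - 1) \<noteq> 0" if "0 < m"
    using deg(2)[OF that] v op_zero[OF q] by force
  obtain P where P: "orth_projs P m"
    and model: "model_space P m = vs.span (orbit (factor_adj ?Q p))"
    and kernel0: "{x. Theta0_adj P m x = 0} = (if m = 0 then {0} else cline (factor_adj ?Q p (m - 1)))"
    using Suc.IH[OF deg(1) lead] by blast
  have H: "vs.span (orbit p) \<subseteq> H2"
    by (rule orbit_span_H2[of p m]) (use pz v in \<open>auto simp: is_poly_deg_def\<close>)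
  have const: "(\<lambda>n. if n = 0 then ?Q x else 0) \<in> vs.span (orbit p)" for x
    by (rule leading_constants_in_orbit_span[OF pz line_proj_range])
  have "model_space (P(Suc m := ?Q)) (Suc m) = {f \<in> H2. factor_adj ?Q f \<in> model_space P m}"
    unfolding model_space_def Theta_adj_extend using factor_adj_H2[OF q] by auto
  also have "\<dots> = vs.span (orbit p)"
    unfolding model by (rule orbit_span_preimage[OF q const H])
  moreover have "{x. Theta0_adj (P(Suc m := ?Q)) (Suc m) x = 0}
      = (if Suc m = 0 then {0} else cline (p (Suc m - 1)))"
  proof -
    have "{x. Theta0_adj P m (x - ?Q x) = 0} = cline (p m)"
      by (rule Theta0_adj_step_kernel[OF P v kernel0 deg(2)])
    then show ?thesis unfolding Theta0_adj_extend by simp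
  qed
  ultimately show ?case using orth_projs_extend[OF P q] by blast
qed

lemma polynomial_model:
  assumes p: "is_poly_deg p N"
  shows "\<exists>P. orth_projs P (Suc N) \<and> E p = vs.span (orbit p) \<and>
             model_space P (Suc N) = vs.span (orbit p) \<and> {x. Theta0_adj P (Suc N) x = 0} = cline (p N)"
proof -
  obtain P where P: "orth_projs P (Suc N)" and model: "model_space P (Suc N) = vs.span (orbit p)"
    and kernel0: "{x. Theta0_adj P (Suc N) x = 0} = cline (p N)"
    using polynomial_projections[of "Suc N" p] p by (auto simp: is_poly_deg_def)
  have "E p = vs.span (orbit p)"
    unfolding E_orbit model[symmetric] by (rule model_space_closed[OF P])
  then show ?thesis using P model kernel0 by blast
qed

section \<open>(ii) implies (i): the model space is cyclic\<close>

lemma top_coeff_elimination: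
  assumes F: "vs.subspace F" and f: "f \<in> F" and w: "w \<in> F"
    and fz: "\<forall>n\<ge>Suc k. f n = 0" and wz: "\<forall>n\<ge>Suc k. w n = 0"
    and a: "f k = a *\<^sub>C v" and b: "w k = b *\<^sub>C v" and b0: "b \<noteq> 0"
  shows "f - seq_scale (a / b) w \<in> {f \<in> F. \<forall>n\<ge>k. f n = 0}"
proof -
  have "f - seq_scale (a / b) w \<in> F"
    by (rule vs.subspace_diff[OF F f vs.subspace_scale[OF F w]])
  moreover have "(f - seq_scale (a / b) w) n = 0" if "k \<le> n" for n
  proof (cases "n = k")
    case True
    have "(a / b) *\<^sub>C (b *\<^sub>C v) = a *\<^sub>C v" using b0 by (simp add: scaleC_scaleC)
    then show ?thesis using True a b by (simp add: seq_scale_def)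
  next
    case False
    then show ?thesis using that fz wz by (simp add: seq_scale_def)
  qed
  ultimately show ?thesis by simp
qed

definition top_coeffs_on_line :: "(nat \<Rightarrow> 'a::complex_inner) set \<Rightarrow> 'a \<Rightarrow> bool" where
  "top_coeffs_on_line F v \<longleftrightarrow> (\<forall>f\<in>F. \<forall>k. (\<forall>n\<ge>Suc k. f n = 0) \<longrightarrow> f k \<in> cline v)"

lemma top_coeffs_on_lineD:
  "top_coeffs_on_line F v \<Longrightarrow> f \<in> F \<Longrightarrow> \<forall>n\<ge>Suc k. f n = 0 \<Longrightarrow> \<exists>c. f k = c *\<^sub>C v"
  by (simp add: top_coeffs_on_line_def cline_iff)

text \<open>If all top coefficients of a subspace \<open>F\<close> lie on one line, the elements of \<open>F\<close> of
  degree \<open>< k\<close> lie in a space spanned by at most \<open>k\<close> vectors: each degree contributes at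
  most one dimension.\<close>

lemma low_degree_dim_bound:
  assumes F: "vs.subspace F"
    and top: "top_coeffs_on_line F v"
  shows "\<exists>W. finite W \<and> card W \<le> k \<and> {f \<in> F. \<forall>n\<ge>k. f n = 0} \<subseteq> vs.span W"
proof (induction k)
  case 0
  have "{f \<in> F. \<forall>n\<ge>0. f n = 0} \<subseteq> vs.span {}" by (auto simp: zero_fun_def)
  then show ?case by (intro exI[of _ "{}"]) simp
next
  case (Suc k)
  then obtain W where W: "finite W" "card W \<le> k" "{f \<in> F. \<forall>n\<ge>k. f n = 0} \<subseteq> vs.span W"
    by blast
  show ?case
  proof (cases "\<exists>w\<in>F. (\<forall>n\<ge>Suc k. w n = 0) \<and> w k \<noteq> 0")
    case False
    have "f n = 0" if "f \<in> F" "\<forall>n\<ge>Suc k. f n = 0" "k \<le> n" for f n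
      using False that by (cases "n = k") auto
    then have "{f \<in> F. \<forall>n\<ge>Suc k. f n = 0} \<subseteq> {f \<in> F. \<forall>n\<ge>k. f n = 0}" by blast
    then show ?thesis using W by (intro exI[of _ W]) auto
  next
    case True
    then obtain w where w: "w \<in> F" "\<forall>n\<ge>Suc k. w n = 0" "w k \<noteq> 0" by blast
    obtain b where b: "w k = b *\<^sub>C v" using top_coeffs_on_lineD[OF top w(1,2)] by blast
    have b0: "b \<noteq> 0" using w(3) b by auto
    have "{f \<in> F. \<forall>n\<ge>Suc k. f n = 0} \<subseteq> vs.span (insert w W)"
    proof
      fix f assume "f \<in> {f \<in> F. \<forall>n\<ge>Suc k. f n = 0}"
      then have f: "f \<in> F" "\<forall>n\<ge>Suc k. f n = 0" by auto
      obtain a where a: "f k = a *\<^sub>C v" using top_coeffs_on_lineD[OF top f] by blast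
      have "f - seq_scale (a / b) w \<in> vs.span W"
        using top_coeff_elimination[OF F f(1) w(1) f(2) w(2) a b b0] W(3) by blast
      then have "f - seq_scale (a / b) w \<in> vs.span (insert w W)"
        using vs.span_mono[of W "insert w W"] by blast
      moreover have "seq_scale (a / b) w \<in> vs.span (insert w W)"
        by (intro vs.span_scale vs.span_base) simp
      ultimately have "(f - seq_scale (a / b) w) + seq_scale (a / b) w \<in> vs.span (insert w W)"
        by (rule vs.span_add)
      then show "f \<in> vs.span (insert w W)" by simp
    qed
    moreover have "card (insert w W) \<le> Suc k" using W(1,2) by (simp add: card_insert_if)
    ultimately show ?thesis using W(1) by (intro exI[of _ "insert w W"]) simp
  qed
qed

lemma exists_full_degree:
  assumes F: "vs.subspace F"
    and top: "top_coeffs_on_line F v"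
    and deg: "\<forall>f\<in>F. \<forall>n\<ge>Suc N. f n = 0"
    and B: "finite B" "card B = Suc N" "B \<subseteq> F" "vs.independent B"
  shows "\<exists>p\<in>F. p N \<noteq> 0"
proof (rule ccontr)
  assume none: "\<not> (\<exists>p\<in>F. p N \<noteq> 0)"
  have "f n = 0" if "f \<in> F" "N \<le> n" for f n
    using none deg that by (cases "n = N") auto
  then have "F \<subseteq> {f \<in> F. \<forall>n\<ge>N. f n = 0}" by blast
  moreover obtain W where W: "finite W" "card W \<le> N" "{f \<in> F. \<forall>n\<ge>N. f n = 0} \<subseteq> vs.span W"
    using low_degree_dim_bound[OF F top] by blast
  ultimately have "card B \<le> card W" using vs.independent_span_bound[OF W(1) B(4)] B(3) by blast
  then show False using B(2) W(2) by simp
qed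

text \<open>A shift-invariant \<open>(N+1)\<close>-dimensional subspace containing a polynomial \<open>p\<close> of degree
  \<open>N\<close> is spanned by the shifts of \<open>p\<close>, which are already \<open>N + 1\<close> independent vectors.\<close>

lemma cyclic_subspace:
  assumes F: "vs.subspace F" and shift: "\<And>f. f \<in> F \<Longrightarrow> bshift f \<in> F"
    and B: "finite B" "card B = Suc N" "vs.span B = F"
    and pF: "p \<in> F" and p: "is_poly_deg p N"
  shows "vs.span (orbit p) = F"
proof -
  have "(bshift ^^ k) p \<in> F" for k by (induction k) (simp_all add: pF shift)
  then have sub: "vs.span (orbit p) \<subseteq> F"
    by (intro vs.span_minimal[OF _ F]) (auto simp: orbit_def)
  have D: "vs.independent (orbit_upto N p)" "card (orbit_upto N p) = Suc N"
    using orbit_upto_independent[OF p] by auto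
  have "F \<subseteq> vs.span (orbit_upto N p)"
  proof
    fix x assume x: "x \<in> F"
    show "x \<in> vs.span (orbit_upto N p)"
    proof (rule ccontr)
      assume nx: "x \<notin> vs.span (orbit_upto N p)"
      then have nx': "x \<notin> orbit_upto N p" using vs.span_superset by blast
      have ind: "vs.independent (insert x (orbit_upto N p))"
        using D(1) nx nx' by (simp add: vs.independent_insert)
      have "insert x (orbit_upto N p) \<subseteq> vs.span B"
        using x sub B(3) orbit_upto_subset vs.span_superset[of "orbit p"] by blast
      then have "card (insert x (orbit_upto N p)) \<le> card B"
        using vs.independent_span_bound[OF B(1) ind] by simp
      then show False using D(2) B(2) nx' orbit_upto_finite[of N p] by simp
    qed
  qed
  then show ?thesis using sub orbit_span_eq_upto[OF p] by blast
qed

lemma model_space_cyclic: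
  assumes P: "orth_projs P (Suc N)"
    and dim: "seq_cdim_eq (model_space P (Suc N)) (Suc N)"
    and K: "{x. Theta0_adj P (Suc N) x = 0} \<subseteq> cline v"
  shows "\<exists>p. is_poly_deg p N \<and> model_space P (Suc N) = E p"
proof -
  let ?F = "model_space P (Suc N)"
  have F: "vs.subspace ?F" by (rule model_space_subspace[OF P])
  obtain B where B: "finite B" "card B = Suc N" "B \<subseteq> ?F" "vs.independent B" "vs.span B = ?F"
    using dim by (auto simp: seq_cdim_eq_def seq_cindependent_eq seq_cspan_eq)
  have top: "top_coeffs_on_line ?F v"
    using K model_space_top_coeff[OF P] by (auto simp: top_coeffs_on_line_def)
  have deg: "\<forall>f\<in>?F. \<forall>n\<ge>Suc N. f n = 0"
    using model_space_degree[OF P] by blast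
  obtain p where p: "p \<in> ?F" "p N \<noteq> 0"
    using exists_full_degree[OF F top deg B(1-4)] by blast
  have deg: "is_poly_deg p N"
    using p model_space_degree[OF P p(1)] by (auto simp: is_poly_deg_def Suc_le_eq)
  have "vs.span (orbit p) = ?F"
    by (rule cyclic_subspace[OF F model_space_shift B(1,2,5) p(1) deg])
  then have "E p = ?F" by (simp add: E_orbit model_space_closed[OF P])
  then show ?thesis using deg by blast
qed

lemma Theta_conditions_iff:
  "((\<forall>k\<in>{1..N+1}. orth_proj (P k)) \<and> F = h2_orth_compl (Theta_mult P N ` H2) \<and>
      cdim_eq {x. adjoint (Theta0 P N) x = 0} 1) \<longleftrightarrow>
   (orth_projs P (Suc N) \<and> F = model_space P (Suc N) \<and>
      (\<exists>v. v \<noteq> 0 \<and> {x. Theta0_adj P (Suc N) x = 0} = cline v))"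
proof (cases "orth_projs P (Suc N)")
  case True
  then show ?thesis
    unfolding Theta_mult_eq orth_compl_Theta_range[OF True] adjoint_Theta0[OF True] cdim_eq_1_iff
    by (simp add: orth_projs_def)
next
  case False
  then show ?thesis unfolding orth_projs_def by auto
qed

theorem mainTheorem7:
  fixes F :: "(nat \<Rightarrow> 'x::{complex_inner, complete_space}) set" and N :: nat
  assumes "separable_space_ax TYPE('x)"
    and "h2_closed_subspace F"
  shows "(\<exists>p. is_poly_deg p N \<and> F = E p) \<longleftrightarrow>
         (seq_cdim_eq F (N + 1) \<and>
          (\<exists>P. (\<forall>k\<in>{1..N+1}. orth_proj (P k)) \<and>
               F = h2_orth_compl (Theta_mult P N ` H2) \<and>
               cdim_eq {x. adjoint (Theta0 P N) x = 0} 1))"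
  unfolding Theta_conditions_iff
proof
  assume "\<exists>p. is_poly_deg p N \<and> F = E p"
  then obtain p where p: "is_poly_deg p N" and F: "F = E p" by blast
  then have "p N \<noteq> 0" by (simp add: is_poly_deg_def)
  then show "seq_cdim_eq F (N + 1) \<and> (\<exists>P. orth_projs P (Suc N) \<and> F = model_space P (Suc N) \<and>
      (\<exists>v. v \<noteq> 0 \<and> {x. Theta0_adj P (Suc N) x = 0} = cline v))"
    using polynomial_model[OF p] orbit_span_dim[OF p] F by auto
next
  assume "seq_cdim_eq F (N + 1) \<and> (\<exists>P. orth_projs P (Suc N) \<and> F = model_space P (Suc N) \<and>
      (\<exists>v. v \<noteq> 0 \<and> {x. Theta0_adj P (Suc N) x = 0} = cline v))"
  then show "\<exists>p. is_poly_deg p N \<and> F = E p"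
    using model_space_cyclic by fastforce
qed

end
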